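(* Let $b\in\mathbb{N}$, $b\ge1$, $n=\frac{2^b}{2}+b$, and $a:=2^b=2(n-b)$. Then there exist $a$ sequences $S_0,\dots,S_{a-1}$ of binary vectors, where $S_i=(S_{i,1},S_{i,2},\dots,S_{i,2^n/a})$ with each $S_{i,k}\in\{0,1\}^n$, such that: (1) the sets $\{S_{i,k}:1\le k\le 2^n/a\}$, $i=0,\dots,a-1$, form a partition of $\{0,1\}^n$ (in particular all $S_{i,k}$ are distinct); (2) for all $i\in\{0,\dots,a-1\}$ and all $k\in\{1,\dots,\frac{2^n}{a}-1\}$, $H(S_{i,k},S_{i,k+1})=1$; (3) for all $i,j\in\{0,\dots,a-1\}$ with $i\neq j$ and all $k\in\{1,\dots,\frac{2^n}{a}-1\}$, the coordinate in which $S_{i,k}$ and $S_{i,k+1}$ differ is different from the coordinate in which $S_{j,k}$ and $S_{j,k+1}$ differ, unless $H(S_{i,k},S_{j,k})=1$.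
   Context: $H(u,v)$ denotes the Hamming distance between binary vectors $u,v\in\{0,1\}^n$, i.e. the number of coordinates in which they differ. *)

theory Defs
  imports Main
begin

definition bin_vecs :: "nat \<Rightarrow> bool list set" where
  "bin_vecs n = {v. length v = n}"

definition hamming :: "bool list \<Rightarrow> bool list \<Rightarrow> nat" where
  "hamming u v = card {c. c < length u \<and> c < length v \<and> u ! c \<noteq> v ! c}"

text \<open>The coordinate in which u and v differ (meaningful when hamming u v = 1).\<close>
definition diff_coord :: "bool list \<Rightarrow> bool list \<Rightarrow> nat" where
  "diff_coord u v = (THE c. c < length u \<and> c < length v \<and> u ! c \<noteq> v ! c)"

end

theory Submission
  imports Defs
begin

text \<open>
  Put \<open>m = 2^(b-1)\<close>, so \<open>a = 2m\<close> and \<open>n = b + m\<close>. Every sequence runs through the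
  reflected Gray code of length \<open>m\<close> in its last \<open>m\<close> coordinates, but the sequences are
  grouped in \<open>m\<close> pairs and pair \<open>p\<close> reads the Gray code cyclically rotated by \<open>p\<close>.
  Hence at each step the \<open>m\<close> pairs flip \<open>m\<close> pairwise distinct coordinates. The first
  \<open>b\<close> coordinates are a constant label: a parity bit separating the two members of a pair,
  followed by a Gray code word naming the pair. Within a pair the two sequences therefore
  differ only in the parity bit, which is exactly the exception allowed in (3), and the
  \<open>2m \<cdot> 2^m = 2^n\<close> vectors obtained are distinct, hence exhaust \<open>{0,1}^n\<close>.
\<close>

definition diff_coords :: "bool list \<Rightarrow> bool list \<Rightarrow> nat set" where
  "diff_coords u v = {c. c < length u \<and> c < length v \<and> u ! c \<noteq> v ! c}"

lemma hamming_diff_coord_if_diff_coords_eq: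
  assumes "diff_coords u v = {c}"
  shows "hamming u v = 1 \<and> diff_coord u v = c"
proof -
  have "hamming u v = card (diff_coords u v)" and "diff_coord u v = (THE c. c \<in> diff_coords u v)"
    by (simp_all add: hamming_def diff_coord_def diff_coords_def)
  with assms show ?thesis
    by simp
qed

lemma diff_coords_commute: "diff_coords u v = diff_coords v u"
  unfolding diff_coords_def by auto

lemma diff_coords_self [simp]: "diff_coords u u = {}"
  unfolding diff_coords_def by auto

lemma diff_coords_Cons:
  "diff_coords (x # u) (y # v) = (if x = y then {} else {0}) \<union> Suc ` diff_coords u v"
proof (rule set_eqI)
  fix c
  show "c \<in> diff_coords (x # u) (y # v) \<longleftrightarrow> c \<in> (if x = y then {} else {0}) \<union> Suc ` diff_coords u v"
    by (cases c) (auto simp: diff_coords_def)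
qed

lemma diff_coords_append:
  assumes "length u = length u'"
  shows "diff_coords (u @ v) (u' @ v') = diff_coords u u' \<union> (\<lambda>c. c + length u) ` diff_coords v v'"
proof (rule set_eqI)
  fix c
  show "c \<in> diff_coords (u @ v) (u' @ v') \<longleftrightarrow> c \<in> diff_coords u u' \<union> (\<lambda>c. c + length u) ` diff_coords v v'"
  proof (cases "c < length u")
    case True
    then show ?thesis using assms by (auto simp: diff_coords_def nth_append)
  next
    case False
    then obtain d where "c = d + length u" by (metis add.commute le_Suc_ex not_less)
    then show ?thesis using assms by (auto simp: diff_coords_def nth_append)
  qed
qed

lemma diff_coords_rotate:
  assumes "length u = length v"
  shows "diff_coords (rotate p u) (rotate p v) = {j. j < length u \<and> (p + j) mod length u \<in> diff_coords u v}"
  using assms by (auto simp: diff_coords_def nth_rotate) (meson mod_less_divisor order.strict_trans1 zero_le)+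

lemma add_mod_right_cancel: "(p + d) mod (m::nat) = (q + d) mod m \<Longrightarrow> p mod m = q mod m"
  by (simp add: add.assoc add.commute nat_mod_eq_iff)

lemma inj_on_add_mod: "inj_on (\<lambda>j. (p + j) mod m) {..<(m::nat)}"
proof (rule inj_onI)
  fix j j'
  assume "j \<in> {..<m}" "j' \<in> {..<m}" "(p + j) mod m = (p + j') mod m"
  then show "j = j'"
    using add_mod_right_cancel[of j p m j'] by (simp add: add.commute)
qed

lemma image_add_mod: "(\<lambda>j. (p + j) mod m) ` {..<m} = {..<(m::nat)}"
  by (rule endo_inj_surj) (auto simp: inj_on_add_mod)

lemma rotate_eq_rotate_iff: "rotate p u = rotate p v \<longleftrightarrow> u = v"
proof
  assume eq: "rotate p u = rotate p v"
  then have len: "length u = length v"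
    by (metis length_rotate)
  show "u = v"
  proof (rule nth_equalityI[OF len])
    fix c
    assume "c < length u"
    then have "c \<in> (\<lambda>j. (p + j) mod length u) ` {..<length u}"
      by (simp add: image_add_mod)
    then obtain j where j: "j < length u" "c = (p + j) mod length u"
      by blast
    have "u ! c = rotate p u ! j"
      using j by (simp add: nth_rotate)
    also have "\<dots> = v ! c"
      using j eq len by (simp add: nth_rotate)
    finally show "u ! c = v ! c" .
  qed
qed simp

lemma diff_coords_rotate_eq_singleton:
  assumes "length u = length v" and "diff_coords u v = {c}"
  obtains d where "diff_coords (rotate p u) (rotate p v) = {d}" and "(p + d) mod length u = c"
proof -
  have "c < length u"
    using assms(2) unfolding diff_coords_def by auto
  then have "c \<in> (\<lambda>j. (p + j) mod length u) ` {..<length u}"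
    by (simp add: image_add_mod)
  then obtain d where d: "d < length u" "(p + d) mod length u = c"
    by blast
  have "diff_coords (rotate p u) (rotate p v) = {j. j < length u \<and> (p + j) mod length u = (p + d) mod length u}"
    using assms d by (simp add: diff_coords_rotate)
  also have "\<dots> = {d}"
    using inj_on_add_mod[of p "length u"] d(1) by (auto simp: inj_on_def)
  finally show thesis
    using that d(2) by blast
qed

text \<open>The reflected binary Gray code, most significant bit first.\<close>

fun gray :: "nat \<Rightarrow> nat \<Rightarrow> bool list" where
  "gray 0 k = []"
| "gray (Suc m) k = (if k < 2 ^ m then False # gray m k else True # gray m (2 ^ Suc m - 1 - k))"

lemma length_gray [simp]: "length (gray m k) = m"
  by (induction m arbitrary: k) auto

lemma inj_on_gray: "inj_on (gray m) {..<2 ^ m}"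
proof (induction m)
  case 0
  then show ?case by (simp add: inj_on_def)
next
  case (Suc m)
  show ?case
  proof (rule inj_onI)
    fix k k'
    assume k: "k \<in> {..<2 ^ Suc m}" and k': "k' \<in> {..<2 ^ Suc m}"
      and eq: "gray (Suc m) k = gray (Suc m) k'"
    have iff: "k < 2 ^ m \<longleftrightarrow> k' < 2 ^ m"
      using eq by (auto split: if_splits)
    show "k = k'"
    proof (cases "k < 2 ^ m")
      case True
      then show ?thesis
        using Suc.IH iff eq by (auto simp: inj_on_def)
    next
      case False
      then have "2 ^ Suc m - 1 - k = 2 ^ Suc m - 1 - k'"
        using Suc.IH iff eq k k' by (auto simp: inj_on_def)
      then show ?thesis
        using k k' by simp
    qed
  qed
qed

lemma gray_Suc_diff_coords: "Suc k < 2 ^ m \<Longrightarrow> \<exists>c. diff_coords (gray m k) (gray m (Suc k)) = {c}"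
proof (induction m arbitrary: k)
  case 0
  then show ?case by simp
next
  case (Suc m)
  consider "Suc k < 2 ^ m" | "k = 2 ^ m - 1" | "k \<ge> 2 ^ m"
    by linarith
  then show ?case
  proof cases
    case 1
    with Suc.IH obtain c where "diff_coords (gray m k) (gray m (Suc k)) = {c}"
      by blast
    with 1 show ?thesis
      by (simp add: diff_coords_Cons)
  next
    case 2
    then have "2 ^ Suc m - 1 - Suc k = k"
      by simp
    with 2 show ?thesis
      by (simp add: diff_coords_Cons)
  next
    case 3
    define t where "t = 2 ^ Suc m - 2 - k"
    have t: "Suc t < 2 ^ m" "2 ^ Suc m - 1 - k = Suc t" "2 ^ Suc m - 1 - Suc k = t"
      using 3 Suc.prems unfolding t_def by simp_all
    obtain c where "diff_coords (gray m t) (gray m (Suc t)) = {c}"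
      using Suc.IH t(1) by blast
    then have "diff_coords (gray (Suc m) k) (gray (Suc m) (Suc k)) = {Suc c}"
      using 3 t by (simp add: diff_coords_Cons diff_coords_commute)
    then show ?thesis
      by blast
  qed
qed

text \<open>
  Member \<open>i < 2 \<cdot> 2^r\<close> at time \<open>k \<in> {1..2^(2^r)}\<close> (times start at 1, hence \<open>k - 1\<close>);
  its pair \<open>i div 2\<close> is both labelled and used as the rotation.
\<close>

definition rotated_gray_family :: "nat \<Rightarrow> nat \<Rightarrow> nat \<Rightarrow> bool list" where
  "rotated_gray_family r i k = odd i # gray r (i div 2) @ rotate (i div 2) (gray (2 ^ r) (k - 1))"

lemma length_rotated_gray_family [simp]: "length (rotated_gray_family r i k) = Suc (r + 2 ^ r)"
  by (simp add: rotated_gray_family_def)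

lemma inj_on_rotated_gray_family:
  "inj_on (\<lambda>(i, k). rotated_gray_family r i k) ({..<2 * 2 ^ r} \<times> {1..2 ^ 2 ^ r})"
proof (rule inj_onI)
  fix x x'
  assume "x \<in> {..<2 * 2 ^ r} \<times> {1..2 ^ 2 ^ r}" and "x' \<in> {..<2 * 2 ^ r} \<times> {1..2 ^ 2 ^ r}"
    and "(\<lambda>(i, k). rotated_gray_family r i k) x = (\<lambda>(i, k). rotated_gray_family r i k) x'"
  then obtain i k i' k' where x: "x = (i, k)" "x' = (i', k')"
    and i: "i < 2 * 2 ^ r" "i' < 2 * 2 ^ r" and k: "k \<in> {1..2 ^ 2 ^ r}" "k' \<in> {1..2 ^ 2 ^ r}"
    and eq: "rotated_gray_family r i k = rotated_gray_family r i' k'"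
    by auto
  have "gray r (i div 2) = gray r (i' div 2)"
    using eq by (simp add: rotated_gray_family_def)
  then have pair: "i div 2 = i' div 2"
    using inj_on_gray[of r] i by (auto simp: inj_on_def)
  moreover have "odd i = odd i'"
    using eq by (simp add: rotated_gray_family_def)
  ultimately have "i = i'"
    by (metis div_mult_mod_eq mod2_eq_if)
  have "rotate (i div 2) (gray (2 ^ r) (k - 1)) = rotate (i div 2) (gray (2 ^ r) (k' - 1))"
    using eq pair by (simp add: rotated_gray_family_def)
  then have "gray (2 ^ r) (k - 1) = gray (2 ^ r) (k' - 1)"
    by (simp only: rotate_eq_rotate_iff)
  then have "k - 1 = k' - 1"
    using inj_on_gray[of "2 ^ r"] k by (auto simp: inj_on_def)
  with k have "k = k'"
    by auto
  with \<open>i = i'\<close> show "x = x'"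
    unfolding x by simp
qed

lemma rotated_gray_family_image:
  "(\<lambda>(i, k). rotated_gray_family r i k) ` ({..<2 * 2 ^ r} \<times> {1..2 ^ 2 ^ r})
     = bin_vecs (Suc (r + 2 ^ r))"
proof (rule card_subset_eq)
  show "finite (bin_vecs (Suc (r + 2 ^ r)))"
    using finite_lists_length_eq[of "UNIV :: bool set"] by (simp add: bin_vecs_def)
  show "(\<lambda>(i, k). rotated_gray_family r i k) ` ({..<2 * 2 ^ r} \<times> {1..2 ^ 2 ^ r})
      \<subseteq> bin_vecs (Suc (r + 2 ^ r))"
    by (auto simp: bin_vecs_def)
  have "card (bin_vecs (Suc (r + 2 ^ r))) = 2 ^ Suc (r + 2 ^ r)"
    using card_lists_length_eq[of "UNIV :: bool set"] by (simp add: bin_vecs_def)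
  also have "\<dots> = card ({..<2 * 2 ^ r :: nat} \<times> {1..(2::nat) ^ 2 ^ r})"
    by (simp add: card_cartesian_product power_add)
  finally show "card ((\<lambda>(i, k). rotated_gray_family r i k) ` ({..<2 * 2 ^ r} \<times> {1..2 ^ 2 ^ r}))
      = card (bin_vecs (Suc (r + 2 ^ r)))"
    using card_image[OF inj_on_rotated_gray_family] by simp
qed

lemma diff_coords_rotated_gray_family_Suc:
  assumes "diff_coords (gray (2 ^ r) (k - 1)) (gray (2 ^ r) k) = {c}" and "1 \<le> k"
  obtains d where "diff_coords (rotated_gray_family r i k) (rotated_gray_family r i (Suc k)) = {Suc (r + d)}"
    and "(i div 2 + d) mod 2 ^ r = c"
proof -
  obtain d
    where d: "diff_coords (rotate (i div 2) (gray (2 ^ r) (k - 1))) (rotate (i div 2) (gray (2 ^ r) k)) = {d}"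
      "(i div 2 + d) mod 2 ^ r = c"
    using diff_coords_rotate_eq_singleton[OF _ assms(1)] by (metis length_gray)
  have "diff_coords (rotated_gray_family r i k) (rotated_gray_family r i (Suc k)) = {Suc (r + d)}"
    using assms(2) d(1) by (simp add: rotated_gray_family_def diff_coords_Cons diff_coords_append)
  with d(2) show thesis
    using that by blast
qed

lemma gray_diff_coords_pred:
  assumes "1 \<le> k" and "k < 2 ^ m"
  obtains c where "diff_coords (gray m (k - 1)) (gray m k) = {c}"
  using gray_Suc_diff_coords[of "k - 1" m] assms by auto

lemma hamming_rotated_gray_family_Suc:
  assumes "1 \<le> k" and "k < 2 ^ 2 ^ r"
  shows "hamming (rotated_gray_family r i k) (rotated_gray_family r i (Suc k)) = 1"
proof -
  obtain c where "diff_coords (gray (2 ^ r) (k - 1)) (gray (2 ^ r) k) = {c}"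
    using gray_diff_coords_pred assms by blast
  then obtain d where "diff_coords (rotated_gray_family r i k) (rotated_gray_family r i (Suc k)) = {Suc (r + d)}"
    using diff_coords_rotated_gray_family_Suc assms(1) by blast
  then show ?thesis
    using hamming_diff_coord_if_diff_coords_eq by blast
qed

text \<open>Different pairs read the same Gray code step under different rotations.\<close>

lemma diff_coord_rotated_gray_family_Suc_neq:
  assumes "1 \<le> k" and "k < 2 ^ 2 ^ r"
    and "i div 2 < 2 ^ r" and "j div 2 < 2 ^ r" and "i div 2 \<noteq> j div 2"
  shows "diff_coord (rotated_gray_family r i k) (rotated_gray_family r i (Suc k))
       \<noteq> diff_coord (rotated_gray_family r j k) (rotated_gray_family r j (Suc k))"
proof
  obtain c where c: "diff_coords (gray (2 ^ r) (k - 1)) (gray (2 ^ r) k) = {c}"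
    using gray_diff_coords_pred assms(1,2) by blast
  obtain d where d: "diff_coords (rotated_gray_family r i k) (rotated_gray_family r i (Suc k)) = {Suc (r + d)}"
    "(i div 2 + d) mod 2 ^ r = c"
    using diff_coords_rotated_gray_family_Suc[OF c assms(1)] by blast
  obtain d' where d': "diff_coords (rotated_gray_family r j k) (rotated_gray_family r j (Suc k)) = {Suc (r + d')}"
    "(j div 2 + d') mod 2 ^ r = c"
    using diff_coords_rotated_gray_family_Suc[OF c assms(1)] by blast
  assume "diff_coord (rotated_gray_family r i k) (rotated_gray_family r i (Suc k))
       = diff_coord (rotated_gray_family r j k) (rotated_gray_family r j (Suc k))"
  then have "d = d'"
    using hamming_diff_coord_if_diff_coords_eq[OF d(1)] hamming_diff_coord_if_diff_coords_eq[OF d'(1)]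
    by simp
  then have "(i div 2) mod 2 ^ r = (j div 2) mod 2 ^ r"
    using add_mod_right_cancel d(2) d'(2) by metis
  with assms(3-5) show False
    by simp
qed

lemma hamming_rotated_gray_family_partner:
  assumes "i div 2 = j div 2" and "i \<noteq> j"
  shows "hamming (rotated_gray_family r i k) (rotated_gray_family r j k) = 1"
proof -
  have "odd i \<noteq> odd j"
    using assms by (metis div_mult_mod_eq mod2_eq_if)
  then have "diff_coords (rotated_gray_family r i k) (rotated_gray_family r j k) = {0}"
    using assms(1) by (simp add: rotated_gray_family_def diff_coords_Cons diff_coords_append)
  then show ?thesis
    using hamming_diff_coord_if_diff_coords_eq by blast
qed

theorem lemma1:
  fixes b n a :: nat
  assumes "b \<ge> 1" and "n = 2 ^ b div 2 + b" and "a = 2 ^ b"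
  shows "\<exists>S :: nat \<Rightarrow> nat \<Rightarrow> bool list.
     (\<forall>i<a. \<forall>k\<in>{1..2 ^ n div a}. S i k \<in> bin_vecs n)
   \<and> inj_on (\<lambda>(i, k). S i k) ({..<a} \<times> {1..2 ^ n div a})
   \<and> (\<lambda>(i, k). S i k) ` ({..<a} \<times> {1..2 ^ n div a}) = bin_vecs n
   \<and> (\<forall>i<a. \<forall>k\<in>{1..2 ^ n div a - 1}. hamming (S i k) (S i (k + 1)) = 1)
   \<and> (\<forall>i<a. \<forall>j<a. \<forall>k\<in>{1..2 ^ n div a - 1}. i \<noteq> j \<longrightarrow>
        hamming (S i k) (S j k) \<noteq> 1 \<longrightarrow>
        diff_coord (S i k) (S i (k + 1)) \<noteq> diff_coord (S j k) (S j (k + 1)))"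
proof -
  define r where "r = b - 1"
  have a: "a = 2 * 2 ^ r" and n: "n = Suc (r + 2 ^ r)"
    using assms unfolding r_def by (cases b; simp)+
  then have len: "2 ^ n div a = 2 ^ 2 ^ r"
    by (simp add: power_add)
  have step: "1 \<le> k" "k < 2 ^ 2 ^ r" if "k \<in> {1..2 ^ 2 ^ r - 1}" for k :: nat
    using that by auto
  show ?thesis
    unfolding len unfolding a n
  proof (intro exI[of _ "rotated_gray_family r"] conjI allI impI ballI)
    show "rotated_gray_family r i k \<in> bin_vecs (Suc (r + 2 ^ r))" for i k
      by (simp add: bin_vecs_def)
    show "hamming (rotated_gray_family r i k) (rotated_gray_family r i (k + 1)) = 1"
      if "k \<in> {1..2 ^ 2 ^ r - 1}" for i k
      using hamming_rotated_gray_family_Suc step[OF that] by simp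
    show "diff_coord (rotated_gray_family r i k) (rotated_gray_family r i (k + 1))
        \<noteq> diff_coord (rotated_gray_family r j k) (rotated_gray_family r j (k + 1))"
      if "i < 2 * 2 ^ r" "j < 2 * 2 ^ r" "k \<in> {1..2 ^ 2 ^ r - 1}" "i \<noteq> j"
        "hamming (rotated_gray_family r i k) (rotated_gray_family r j k) \<noteq> 1" for i j k
    proof -
      have "i div 2 \<noteq> j div 2"
        using hamming_rotated_gray_family_partner that(4,5) by blast
      moreover have "i div 2 < 2 ^ r" "j div 2 < 2 ^ r"
        using that(1,2) by auto
      ultimately show ?thesis
        using diff_coord_rotated_gray_family_Suc_neq[OF step[OF that(3)]] by simp
    qed
  qed (fact inj_on_rotated_gray_family rotated_gray_family_image)+
qed

end
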